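(* Every graph that is $C_3$-free and probe $P_5$-free is $3$-colourable. In particular, every probe $(C_3,P_5)$-free graph is $3$-colourable.
   Context: All graphs are finite and simple. $C_3$ is the triangle and $P_5$ is the path on $5$ vertices. A graph is $H$-free if it contains no induced subgraph isomorphic to $H$, and $(H_1,H_2)$-free if it is both $H_1$-free and $H_2$-free. For $G=(V,E)$ and a set $F$ of pairs of vertices, $G+F=(V,E\cup F)$. A graph $G$ is probe $P_5$-free if there is an independent set $N$ of $G$ and a set $F\subseteq\binom{N}{2}$ such that $G+F$ is $P_5$-free; $G$ is probe $(C_3,P_5)$-free if there is an independent set $N$ and $F\subseteq\binom{N}{2}$ such that $G+F$ is $(C_3,P_5)$-free. *)

theory Defs
  imports Main
begin

definition simple_graph :: "'a set \<Rightarrow> 'a set set \<Rightarrow> bool" where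
  "simple_graph V E \<longleftrightarrow> finite V \<and> (\<forall>e\<in>E. e \<subseteq> V \<and> card e = 2)"

definition pairs :: "'a set \<Rightarrow> 'a set set" where
  "pairs N = {e. e \<subseteq> N \<and> card e = 2}"

definition contains_induced ::
  "nat set \<Rightarrow> nat set set \<Rightarrow> 'a set \<Rightarrow> 'a set set \<Rightarrow> bool" where
  "contains_induced VH EH V E \<longleftrightarrow>
     (\<exists>f. inj_on f VH \<and> f ` VH \<subseteq> V \<and>
          (\<forall>x\<in>VH. \<forall>y\<in>VH. ({f x, f y} \<in> E \<longleftrightarrow> {x, y} \<in> EH)))"

definition H_free :: "nat set \<Rightarrow> nat set set \<Rightarrow> 'a set \<Rightarrow> 'a set set \<Rightarrow> bool" where
  "H_free VH EH V E \<longleftrightarrow> \<not> contains_induced VH EH V E"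

definition C3_V :: "nat set" where "C3_V = {0, 1, 2}"
definition C3_E :: "nat set set" where "C3_E = {{0, 1}, {1, 2}, {0, 2}}"

definition P5_V :: "nat set" where "P5_V = {0, 1, 2, 3, 4}"
definition P5_E :: "nat set set" where "P5_E = {{0, 1}, {1, 2}, {2, 3}, {3, 4}}"

definition C3_free :: "'a set \<Rightarrow> 'a set set \<Rightarrow> bool" where
  "C3_free V E \<longleftrightarrow> H_free C3_V C3_E V E"

definition P5_free :: "'a set \<Rightarrow> 'a set set \<Rightarrow> bool" where
  "P5_free V E \<longleftrightarrow> H_free P5_V P5_E V E"

definition independent_set :: "'a set \<Rightarrow> 'a set set \<Rightarrow> 'a set \<Rightarrow> bool" where
  "independent_set V E N \<longleftrightarrow> N \<subseteq> V \<and> (\<forall>u\<in>N. \<forall>v\<in>N. {u, v} \<notin> E)"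

definition probe_P5_free :: "'a set \<Rightarrow> 'a set set \<Rightarrow> bool" where
  "probe_P5_free V E \<longleftrightarrow>
     (\<exists>N F. independent_set V E N \<and> F \<subseteq> pairs N \<and> P5_free V (E \<union> F))"

definition probe_C3_P5_free :: "'a set \<Rightarrow> 'a set set \<Rightarrow> bool" where
  "probe_C3_P5_free V E \<longleftrightarrow>
     (\<exists>N F. independent_set V E N \<and> F \<subseteq> pairs N \<and>
            C3_free V (E \<union> F) \<and> P5_free V (E \<union> F))"

definition colourable :: "nat \<Rightarrow> 'a set \<Rightarrow> 'a set set \<Rightarrow> bool" where
  "colourable k V E \<longleftrightarrow>
     (\<exists>c :: 'a \<Rightarrow> nat. (\<forall>v\<in>V. c v < k) \<and>
        (\<forall>u\<in>V. \<forall>v\<in>V. {u, v} \<in> E \<longrightarrow> c u \<noteq> c v))"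

end

theory Submission
  imports Defs
begin

text \<open>A graph without triangles, induced \<open>P\<^sub>5\<close> and induced \<open>C\<^sub>5\<close> is bipartite: around any
  vertex the first three BFS layers are independent and nothing leaves the ball of radius 3,
  so the ball is 2-coloured by layer parity and removed.

  For a triangle-free \<open>G\<close> with probe set \<open>N\<close>, any induced \<open>P\<^sub>5\<close> of \<open>G\<close> meeting \<open>N\<close> at most
  once survives in \<open>G + F\<close>, so it cannot exist. If \<open>G - N\<close> contains an induced \<open>C\<^sub>5\<close>, every
  neighbour of it is adjacent to two cycle vertices at distance two; hence the neighbourhood
  of the cycle is a union of components, 3-colourable by choosing a common neighbour on the
  cycle, and we recurse on the rest. Otherwise \<open>G - N\<close> is bipartite; its isolated vertices
  get colour 0, the others colours 1 and 2, and a probe vertex seeing an isolated vertex has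
  all its other neighbours on one side, so it takes the colour of the other side.\<close>

definition proper_colouring :: "'a set \<Rightarrow> 'a set set \<Rightarrow> ('a \<Rightarrow> 'c) \<Rightarrow> bool" where
  "proper_colouring V E c \<longleftrightarrow> (\<forall>u\<in>V. \<forall>v\<in>V. {u, v} \<in> E \<longrightarrow> c u \<noteq> c v)"

lemma proper_colouringD:
  "proper_colouring V E c \<Longrightarrow> u \<in> V \<Longrightarrow> v \<in> V \<Longrightarrow> {u, v} \<in> E \<Longrightarrow> c u \<noteq> c v"
  unfolding proper_colouring_def by blast

lemma colourable_iff_proper_colouring:
  "colourable k V E \<longleftrightarrow> (\<exists>c. (\<forall>v\<in>V. c v < k) \<and> proper_colouring V E c)"
  unfolding colourable_def proper_colouring_def ..

lemma proper_colouring_combine: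
  assumes "\<forall>u\<in>R. \<forall>v\<in>V - R. {u, v} \<notin> E"
    and "proper_colouring R E c" and "proper_colouring (V - R) E c'"
  shows "proper_colouring V E (\<lambda>v. if v \<in> R then c v else c' v)"
  using assms unfolding proper_colouring_def by (metis DiffI insert_commute)

lemma colourable_combine:
  assumes "\<forall>u\<in>R. \<forall>v\<in>V - R. {u, v} \<notin> E"
    and "colourable k R E" and "colourable k (V - R) E"
  shows "colourable k V E"
proof -
  obtain c c' where "\<forall>v\<in>R. c v < k" "proper_colouring R E c"
    and "\<forall>v\<in>V - R. c' v < k" "proper_colouring (V - R) E c'"
    using assms(2,3) unfolding colourable_iff_proper_colouring by blast
  moreover from this have "proper_colouring V E (\<lambda>v. if v \<in> R then c v else c' v)"
    by (intro proper_colouring_combine[OF assms(1)])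
  ultimately show ?thesis
    unfolding colourable_iff_proper_colouring by (intro exI[of _ "\<lambda>v. if v \<in> R then c v else c' v"]) auto
qed

definition neighbourhood :: "'a set \<Rightarrow> 'a set set \<Rightarrow> 'a set \<Rightarrow> 'a set" where
  "neighbourhood V E X = {w \<in> V. \<exists>x\<in>X. {w, x} \<in> E}"

text \<open>Quantifying over all, not necessarily distinct, vertices makes a triangle-free graph
  loopless as well.\<close>

definition triangle_free :: "'a set \<Rightarrow> 'a set set \<Rightarrow> bool" where
  "triangle_free V E \<longleftrightarrow> (\<forall>a\<in>V. \<forall>b\<in>V. \<forall>c\<in>V. {a, b} \<in> E \<longrightarrow> {b, c} \<in> E \<longrightarrow> {a, c} \<notin> E)"

lemma triangle_freeD:
  "triangle_free V E \<Longrightarrow> a \<in> V \<Longrightarrow> b \<in> V \<Longrightarrow> c \<in> V \<Longrightarrow> {a, b} \<in> E \<Longrightarrow> {b, c} \<in> E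
    \<Longrightarrow> {a, c} \<notin> E"
  unfolding triangle_free_def by blast

lemma triangle_free_no_loop: "triangle_free V E \<Longrightarrow> a \<in> V \<Longrightarrow> {a} \<notin> E"
  using triangle_freeD[of V E a a a] by auto

lemma triangle_free_subset: "triangle_free V E \<Longrightarrow> W \<subseteq> V \<Longrightarrow> triangle_free W E"
  unfolding triangle_free_def by blast

lemma triangle_free_edge_subset: "triangle_free V H \<Longrightarrow> E \<subseteq> H \<Longrightarrow> triangle_free V E"
  unfolding triangle_free_def by blast

lemma C3_free_imp_triangle_free:
  assumes "C3_free V E" and "\<forall>e\<in>E. card e = 2"
  shows "triangle_free V E"
  unfolding triangle_free_def
proof (intro ballI impI notI)
  fix a b c assume V: "a \<in> V" "b \<in> V" "c \<in> V" and E: "{a, b} \<in> E" "{b, c} \<in> E" "{a, c} \<in> E"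
  have no_loop: "{x} \<notin> E" for x using assms(2) by fastforce
  then have "a \<noteq> b" "b \<noteq> c" "a \<noteq> c" using E by auto
  let ?f = "\<lambda>i::nat. if i = 0 then a else if i = 1 then b else c"
  have "contains_induced C3_V C3_E V E"
    unfolding contains_induced_def
  proof (intro exI conjI)
    show "inj_on ?f C3_V" using \<open>a \<noteq> b\<close> \<open>b \<noteq> c\<close> \<open>a \<noteq> c\<close> unfolding C3_V_def inj_on_def by auto
    show "?f ` C3_V \<subseteq> V" using V unfolding C3_V_def by auto
    show "\<forall>x\<in>C3_V. \<forall>y\<in>C3_V. ({?f x, ?f y} \<in> E) = ({x, y} \<in> C3_E)"
      using E no_loop unfolding C3_V_def C3_E_def by (auto simp: insert_commute doubleton_eq_iff)
  qed
  then show False using assms(1) unfolding C3_free_def H_free_def by blast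
qed

definition induced_P5 :: "'a set set \<Rightarrow> 'a \<Rightarrow> 'a \<Rightarrow> 'a \<Rightarrow> 'a \<Rightarrow> 'a \<Rightarrow> bool" where
  "induced_P5 E a b c d e \<longleftrightarrow>
     {a, b} \<in> E \<and> {b, c} \<in> E \<and> {c, d} \<in> E \<and> {d, e} \<in> E \<and>
     {a, c} \<notin> E \<and> {a, d} \<notin> E \<and> {a, e} \<notin> E \<and> {b, d} \<notin> E \<and> {b, e} \<notin> E \<and> {c, e} \<notin> E"

definition no_induced_P5 :: "'a set \<Rightarrow> 'a set set \<Rightarrow> bool" where
  "no_induced_P5 V E \<longleftrightarrow>
     (\<forall>a\<in>V. \<forall>b\<in>V. \<forall>c\<in>V. \<forall>d\<in>V. \<forall>e\<in>V. \<not> induced_P5 E a b c d e)"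

lemma no_induced_P5D:
  "no_induced_P5 V E \<Longrightarrow> a \<in> V \<Longrightarrow> b \<in> V \<Longrightarrow> c \<in> V \<Longrightarrow> d \<in> V \<Longrightarrow> e \<in> V
    \<Longrightarrow> \<not> induced_P5 E a b c d e"
  unfolding no_induced_P5_def by blast

lemma no_induced_P5_subset: "no_induced_P5 V E \<Longrightarrow> W \<subseteq> V \<Longrightarrow> no_induced_P5 W E"
  unfolding no_induced_P5_def by blast

lemma P5_free_imp_no_induced_P5:
  assumes "P5_free V E" and "\<forall>e\<in>E. card e = 2"
  shows "no_induced_P5 V E"
  unfolding no_induced_P5_def
proof (intro ballI notI)
  fix a b c d e assume V: "a \<in> V" "b \<in> V" "c \<in> V" "d \<in> V" "e \<in> V"
    and P: "induced_P5 E a b c d e"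
  have no_loop: "{x} \<notin> E" for x using assms(2) by fastforce
  then have distinct: "a \<noteq> b" "a \<noteq> c" "a \<noteq> d" "a \<noteq> e" "b \<noteq> c" "b \<noteq> d" "b \<noteq> e"
    "c \<noteq> d" "c \<noteq> e" "d \<noteq> e"
    using P unfolding induced_P5_def by (auto simp: insert_commute)
  let ?f = "\<lambda>i::nat. if i = 0 then a else if i = 1 then b else if i = 2 then c
    else if i = 3 then d else e"
  have "contains_induced P5_V P5_E V E"
    unfolding contains_induced_def
  proof (intro exI conjI)
    show "inj_on ?f P5_V" using distinct unfolding P5_V_def inj_on_def by auto
    show "?f ` P5_V \<subseteq> V" using V unfolding P5_V_def by auto
    show "\<forall>x\<in>P5_V. \<forall>y\<in>P5_V. ({?f x, ?f y} \<in> E) = ({x, y} \<in> P5_E)"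
      using P no_loop unfolding P5_V_def P5_E_def induced_P5_def
      by (auto simp: insert_commute doubleton_eq_iff)
  qed
  then show False using assms(1) unfolding P5_free_def H_free_def by blast
qed

text \<open>An induced \<open>C\<^sub>5\<close> is encoded as a 5-periodic vertex sequence, so that its rotations
  are induced \<open>C\<^sub>5\<close>s as well.\<close>

definition induced_C5 :: "'a set set \<Rightarrow> (nat \<Rightarrow> 'a) \<Rightarrow> bool" where
  "induced_C5 E z \<longleftrightarrow>
     (\<forall>i. z (i + 5) = z i) \<and> (\<forall>i. {z i, z (i + 1)} \<in> E) \<and> (\<forall>i. {z i, z (i + 2)} \<notin> E)"

definition no_induced_C5 :: "'a set \<Rightarrow> 'a set set \<Rightarrow> bool" where
  "no_induced_C5 V E \<longleftrightarrow> \<not> (\<exists>z. range z \<subseteq> V \<and> induced_C5 E z)"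

lemma no_induced_C5_subset: "no_induced_C5 V E \<Longrightarrow> W \<subseteq> V \<Longrightarrow> no_induced_C5 W E"
  unfolding no_induced_C5_def by blast

lemma induced_C5_mod:
  assumes "induced_C5 E z" shows "z (i mod 5) = z i"
proof (induction i rule: less_induct)
  case (less i)
  show ?case
  proof (cases "i < 5")
    case False
    then have "z i = z (i - 5)" using assms unfolding induced_C5_def by (metis le_add_diff_inverse2 not_less)
    then show ?thesis using less False by (simp add: le_mod_geq)
  qed simp
qed

lemma induced_C5_window:
  assumes "induced_C5 E z"
  shows "{z i, z (i + 1)} \<in> E" "{z (i + 1), z (i + 2)} \<in> E" "{z (i + 2), z (i + 3)} \<in> E"
    "{z (i + 3), z (i + 4)} \<in> E" "{z (i + 4), z i} \<in> E"
    and "{z i, z (i + 2)} \<notin> E" "{z i, z (i + 3)} \<notin> E" "{z (i + 1), z (i + 3)} \<notin> E"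
    "{z (i + 1), z (i + 4)} \<notin> E" "{z (i + 2), z (i + 4)} \<notin> E"
proof -
  have adj: "{z j, z (j + 1)} \<in> E" and non: "{z j, z (j + 2)} \<notin> E" and per: "z (j + 5) = z j"
    for j using assms unfolding induced_C5_def by blast+
  have i: "i + 1 + 1 = i + 2" "i + 2 + 1 = i + 3" "i + 3 + 1 = i + 4" "i + 4 + 1 = i + 5"
    "i + 1 + 2 = i + 3" "i + 2 + 2 = i + 4" "i + 3 + 2 = i + 5" "i + 4 + 2 = i + 1 + 5"
    by simp_all
  show "{z i, z (i + 1)} \<in> E" "{z (i + 1), z (i + 2)} \<in> E" "{z (i + 2), z (i + 3)} \<in> E"
    "{z (i + 3), z (i + 4)} \<in> E"
    using adj[of i] adj[of "i + 1"] adj[of "i + 2"] adj[of "i + 3"] unfolding i by simp_all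
  show "{z (i + 4), z i} \<in> E" using adj[of "i + 4"] unfolding i per .
  show "{z i, z (i + 2)} \<notin> E" "{z (i + 1), z (i + 3)} \<notin> E" "{z (i + 2), z (i + 4)} \<notin> E"
    using non[of i] non[of "i + 1"] non[of "i + 2"] unfolding i by simp_all
  show "{z i, z (i + 3)} \<notin> E" using non[of "i + 3"] unfolding i per by (simp add: insert_commute)
  show "{z (i + 1), z (i + 4)} \<notin> E" using non[of "i + 4"] unfolding i per by (simp add: insert_commute)
qed

lemma no_induced_C5D:
  assumes "no_induced_C5 V E" and "a \<in> V" "b \<in> V" "c \<in> V" "d \<in> V" "e \<in> V"
    and "{a, b} \<in> E" "{b, c} \<in> E" "{c, d} \<in> E" "{d, e} \<in> E" "{e, a} \<in> E"
    and "{a, c} \<notin> E" "{b, d} \<notin> E" "{c, e} \<notin> E" "{d, a} \<notin> E" "{e, b} \<notin> E"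
  shows False
proof -
  define z where "z i = [a, b, c, d, e] ! (i mod 5)" for i
  have "induced_C5 E z"
    unfolding induced_C5_def
  proof (intro conjI allI)
    fix i :: nat
    have "(i + 1) mod 5 = (i mod 5 + 1) mod 5" "(i + 2) mod 5 = (i mod 5 + 2) mod 5"
      by (simp_all only: mod_add_left_eq)
    moreover have "i mod 5 \<in> {0, 1, 2, 3, 4}" by auto
    ultimately show "{z i, z (i + 1)} \<in> E" and "{z i, z (i + 2)} \<notin> E"
      using assms(7-) unfolding z_def by (auto simp: insert_commute)
  qed (simp add: z_def)
  moreover have "range z \<subseteq> V"
    using assms(2-6) unfolding z_def by (auto intro!: nth_mem[THEN subsetD[rotated]])
  ultimately show False using assms(1) unfolding no_induced_C5_def by blast
qed

locale bfs_layers =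
  fixes S :: "'a set" and E :: "'a set set" and r :: 'a
  assumes root: "r \<in> S"
    and triangle_free: "triangle_free S E"
    and no_P5: "no_induced_P5 S E"
    and no_C5: "no_induced_C5 S E"
begin

definition layer1 :: "'a set" where
  "layer1 = neighbourhood S E {r}"

definition layer2 :: "'a set" where
  "layer2 = neighbourhood S E layer1 - insert r layer1"

definition layer3 :: "'a set" where
  "layer3 = neighbourhood S E layer2 - insert r (layer1 \<union> layer2)"

definition ball :: "'a set" where
  "ball = insert r (layer1 \<union> layer2 \<union> layer3)"

lemma layer1_iff: "x \<in> layer1 \<longleftrightarrow> x \<in> S \<and> {x, r} \<in> E"
  unfolding layer1_def neighbourhood_def by blast

lemma layer2_iff: "x \<in> layer2 \<longleftrightarrow> x \<in> S \<and> x \<noteq> r \<and> x \<notin> layer1 \<and> (\<exists>y\<in>layer1. {x, y} \<in> E)"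
  unfolding layer2_def neighbourhood_def by blast

lemma layer3_iff:
  "x \<in> layer3 \<longleftrightarrow> x \<in> S \<and> x \<noteq> r \<and> x \<notin> layer1 \<and> x \<notin> layer2 \<and> (\<exists>y\<in>layer2. {x, y} \<in> E)"
  unfolding layer3_def neighbourhood_def by blast

lemma ball_subset: "ball \<subseteq> S"
  using root layer1_iff layer2_iff layer3_iff unfolding ball_def by blast

lemma layer1_independent: "u \<in> layer1 \<Longrightarrow> v \<in> layer1 \<Longrightarrow> {u, v} \<notin> E"
  using triangle_freeD[OF triangle_free, of u r v] root unfolding layer1_iff
  by (auto simp: insert_commute)

lemma layer1_layer3_nonadjacent: "u \<in> layer1 \<Longrightarrow> v \<in> layer3 \<Longrightarrow> {u, v} \<notin> E"
  unfolding layer2_iff layer3_iff by (auto simp: insert_commute)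

lemma layer2_independent: "u \<in> layer2 \<Longrightarrow> v \<in> layer2 \<Longrightarrow> {u, v} \<notin> E"
proof
  assume u: "u \<in> layer2" and v: "v \<in> layer2" and uv: "{u, v} \<in> E"
  obtain pu pv where pu: "pu \<in> layer1" "{u, pu} \<in> E" and pv: "pv \<in> layer1" "{v, pv} \<in> E"
    using u v unfolding layer2_iff by blast
  have S: "u \<in> S" "v \<in> S" "pu \<in> S" "pv \<in> S"
    using u v pu pv unfolding layer1_iff layer2_iff by blast+
  have "{pu, v} \<notin> E" "{pv, u} \<notin> E"
    using triangle_freeD[OF triangle_free, of pu u v] triangle_freeD[OF triangle_free, of pv v u]
      S pu pv uv by (auto simp: insert_commute)
  moreover have "{pu, pv} \<notin> E" using layer1_independent pu pv by blast
  moreover have "{r, u} \<notin> E" "{r, v} \<notin> E" using u v S unfolding layer1_iff layer2_iff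
    by (auto simp: insert_commute)
  ultimately show False
    \<comment> \<open>\<open>r, pu, u, v, pv\<close> would be an induced \<open>C\<^sub>5\<close>\<close>
    using no_induced_C5D[OF no_C5 root S(3,1,2,4)] pu pv uv unfolding layer1_iff
    by (auto simp: insert_commute)
qed

lemma layer3_independent: "u \<in> layer3 \<Longrightarrow> v \<in> layer3 \<Longrightarrow> {u, v} \<notin> E"
proof
  assume u: "u \<in> layer3" and v: "v \<in> layer3" and uv: "{u, v} \<in> E"
  obtain pu pv where pu: "pu \<in> layer2" "{u, pu} \<in> E" and pv: "pv \<in> layer2" "{v, pv} \<in> E"
    using u v unfolding layer3_iff by blast
  obtain g where g: "g \<in> layer1" "{pu, g} \<in> E" using pu unfolding layer2_iff by blast
  have S: "u \<in> S" "v \<in> S" "pu \<in> S" "pv \<in> S" "g \<in> S"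
    using u v pu pv g unfolding layer1_iff layer2_iff layer3_iff by blast+
  have "{pu, v} \<notin> E" "{pv, u} \<notin> E"
    using triangle_freeD[OF triangle_free, of pu u v] triangle_freeD[OF triangle_free, of pv v u]
      S pu pv uv by (auto simp: insert_commute)
  moreover have "{pu, pv} \<notin> E" using layer2_independent pu pv by blast
  moreover have "{g, u} \<notin> E" "{g, v} \<notin> E" using layer1_layer3_nonadjacent g u v by blast+
  moreover have "{g, pu} \<in> E" "{pu, u} \<in> E" using g(2) pu(2) by (simp_all add: insert_commute)
  ultimately have P: "{g, pu} \<in> E" "{pu, u} \<in> E" "{u, v} \<in> E" "{v, pv} \<in> E"
    "{g, u} \<notin> E" "{pu, v} \<notin> E" "{u, pv} \<notin> E" "{v, g} \<notin> E" "{pv, pu} \<notin> E"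
    using uv pv(2) by (simp_all add: insert_commute)
  \<comment> \<open>\<open>g, pu, u, v, pv\<close> is an induced \<open>C\<^sub>5\<close> or an induced \<open>P\<^sub>5\<close>\<close>
  show False
  proof (cases "{pv, g} \<in> E")
    case True
    with P show False using no_induced_C5D[OF no_C5 S(5,3,1,2,4)] by blast
  next
    case False
    with P show False using no_induced_P5D[OF no_P5 S(5,3,1,2,4)]
      unfolding induced_P5_def by (simp add: insert_commute)
  qed
qed

lemma ball_closed: "\<forall>u\<in>ball. \<forall>v\<in>S - ball. {u, v} \<notin> E"
proof (intro ballI notI)
  fix u v assume u: "u \<in> ball" and v: "v \<in> S - ball" and uv: "{u, v} \<in> E"
  have "u \<in> layer3"
    using u v uv root by (auto simp: ball_def layer1_iff layer2_iff layer3_iff insert_commute)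
  then obtain pu where pu: "pu \<in> layer2" "{u, pu} \<in> E" unfolding layer3_iff by blast
  then obtain g where g: "g \<in> layer1" "{pu, g} \<in> E" unfolding layer2_iff by blast
  have S: "u \<in> S" "pu \<in> S" "g \<in> S"
    using \<open>u \<in> layer3\<close> pu g unfolding layer1_iff layer2_iff layer3_iff by blast+
  have "{v, pu} \<notin> E" "{v, g} \<notin> E" "{v, r} \<notin> E"
    using v pu g by (auto simp: ball_def layer1_iff layer2_iff layer3_iff)
  moreover have "{u, g} \<notin> E" using layer1_layer3_nonadjacent[OF g(1) \<open>u \<in> layer3\<close>]
    by (simp add: insert_commute)
  moreover have "{u, r} \<notin> E" "{pu, r} \<notin> E"
    using \<open>u \<in> layer3\<close> pu S by (auto simp: layer1_iff layer2_iff layer3_iff insert_commute)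
  moreover have "{g, r} \<in> E" "{v, u} \<in> E" "v \<in> S"
    using g uv v by (simp_all add: layer1_iff insert_commute)
  ultimately show False
    \<comment> \<open>\<open>v, u, pu, g, r\<close> would be an induced \<open>P\<^sub>5\<close>\<close>
    using no_induced_P5D[OF no_P5 _ S root, of v] pu g unfolding induced_P5_def by blast
qed

lemma ball_parity_colouring: "proper_colouring ball E (\<lambda>x. x \<in> layer1 \<or> x \<in> layer3)"
  unfolding proper_colouring_def
proof (intro ballI impI)
  fix u v assume u: "u \<in> ball" and v: "v \<in> ball" and uv: "{u, v} \<in> E"
  have disjoint: "r \<notin> layer1" "r \<notin> layer3" "layer1 \<inter> layer2 = {}" "layer1 \<inter> layer3 = {}"
    "layer2 \<inter> layer3 = {}"
    using triangle_free_no_loop[OF triangle_free root] layer1_iff layer2_iff layer3_iff by auto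
  consider "u = r" | "u \<in> layer1" | "u \<in> layer2" | "u \<in> layer3" using u ball_def by auto
  then show "(u \<in> layer1 \<or> u \<in> layer3) \<noteq> (v \<in> layer1 \<or> v \<in> layer3)"
  proof cases
    case 1
    then have "v \<in> layer1" using v uv ball_subset by (simp add: layer1_iff insert_commute subset_iff)
    then show ?thesis using 1 disjoint by auto
  next
    case 2
    then have "v \<notin> layer1" "v \<notin> layer3"
      using uv layer1_independent layer1_layer3_nonadjacent by blast+
    then show ?thesis using 2 by blast
  next
    case 3
    then have "v \<noteq> r" "v \<notin> layer2"
      using uv layer2_independent layer1_iff layer2_iff by blast+
    then show ?thesis using 3 v disjoint unfolding ball_def by blast
  next
    case 4
    then have "v \<noteq> r" "v \<notin> layer3" "v \<notin> layer1"
      using uv layer3_independent layer1_layer3_nonadjacent[of v u] layer1_iff layer3_iff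
      by (blast, blast, metis insert_commute)
    then show ?thesis using 4 v disjoint unfolding ball_def by blast
  qed
qed

end

theorem bipartite_if_triangle_P5_C5_free:
  assumes "finite S" and "triangle_free S E" and "no_induced_P5 S E" and "no_induced_C5 S E"
  shows "\<exists>\<phi> :: 'a \<Rightarrow> bool. proper_colouring S E \<phi>"
  using assms
proof (induction "card S" arbitrary: S rule: less_induct)
  case less
  show ?case
  proof (cases "S = {}")
    case True
    then show ?thesis by (intro exI[of _ "\<lambda>_. True"]) (simp add: proper_colouring_def)
  next
    case False
    then obtain r where "r \<in> S" by blast
    with less.prems interpret bfs_layers S E r by unfold_locales
    have "card (S - ball) < card S"
      using \<open>r \<in> S\<close> \<open>finite S\<close> by (intro psubset_card_mono) (auto simp: ball_def)
    with less obtain \<psi> :: "'a \<Rightarrow> bool" where "proper_colouring (S - ball) E \<psi>"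
      by (meson Diff_subset finite_Diff triangle_free_subset no_induced_P5_subset no_induced_C5_subset)
    then show ?thesis
      using proper_colouring_combine[OF ball_closed ball_parity_colouring] by blast
  qed
qed

locale triangle_free_probe_P5_graph =
  fixes V :: "'a set" and E :: "'a set set" and N :: "'a set" and F :: "'a set set"
  assumes finite_V: "finite V"
    and triangle_free: "triangle_free V E"
    and independent: "\<forall>u\<in>N. \<forall>v\<in>N. {u, v} \<notin> E"
    and probe_pairs: "F \<subseteq> pairs N"
    and no_P5: "no_induced_P5 V (E \<union> F)"
begin

lemma subgraph: "W \<subseteq> V \<Longrightarrow> triangle_free_probe_P5_graph W E N F"
  using finite_V triangle_free independent probe_pairs no_P5
  by unfold_locales (auto intro: finite_subset triangle_free_subset no_induced_P5_subset)

lemma no_induced_P5_single_probe: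
  assumes "a \<in> V" "b \<in> V" "c \<in> V" "d \<in> V" "e \<in> V"
    and "\<forall>x\<in>{a, b, c, d, e} \<inter> N. \<forall>y\<in>{a, b, c, d, e} \<inter> N. x = y"
  shows "\<not> induced_P5 E a b c d e"
proof
  assume P: "induced_P5 E a b c d e"
  have "{x, y} \<notin> F" if "x \<in> {a, b, c, d, e}" "y \<in> {a, b, c, d, e}" for x y
  proof
    assume "{x, y} \<in> F"
    then have "x \<in> N" "y \<in> N" "x \<noteq> y" using probe_pairs unfolding pairs_def by auto
    then show False using assms(6) that by blast
  qed
  then have "induced_P5 (E \<union> F) a b c d e" using P unfolding induced_P5_def by simp
  then show False using no_induced_P5D[OF no_P5 assms(1-5)] by blast
qed

lemma no_induced_P5_outside_probes: "no_induced_P5 (V - N) E"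
  unfolding no_induced_P5_def using no_induced_P5_single_probe by blast

definition isolated :: "'a set" where
  "isolated = {t \<in> V - N. \<forall>m\<in>V - N. {t, m} \<notin> E}"

lemma probe_adjacent_within_two_steps:
  assumes "n \<in> N" "n \<in> V" "t \<in> isolated" "{n, t} \<in> E"
    and "x \<in> V - N" "x' \<in> V - N" "y \<in> V - N" "{n, x} \<in> E" "{x, x'} \<in> E" "{x', y} \<in> E"
  shows "{n, y} \<in> E"
proof (rule ccontr)
  assume "{n, y} \<notin> E"
  moreover have "t \<in> V - N" "{t, x} \<notin> E" "{t, x'} \<notin> E" "{t, y} \<notin> E"
    using assms(3,5-7) unfolding isolated_def by auto
  moreover have "{n, x'} \<notin> E" "{x, y} \<notin> E"
    using triangle_freeD[OF triangle_free, of n x x'] triangle_freeD[OF triangle_free, of x x' y] assms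
    by auto
  moreover have "{t, n} \<in> E" using assms(4) by (simp add: insert_commute)
  ultimately have "induced_P5 E t n x x' y" using assms unfolding induced_P5_def by blast
  moreover have "\<not> induced_P5 E t n x x' y"
    using \<open>t \<in> V - N\<close> assms by (intro no_induced_P5_single_probe) auto
  ultimately show False by blast
qed

lemma probe_neighbours_same_side:
  fixes \<phi> :: "'a \<Rightarrow> bool"
  assumes \<phi>: "proper_colouring (V - N) E \<phi>"
    and n: "n \<in> N" "n \<in> V" "t \<in> isolated" "{n, t} \<in> E"
    and x: "x \<in> V - N - isolated" "{n, x} \<in> E" and y: "y \<in> V - N - isolated" "{n, y} \<in> E"
  shows "\<phi> x = \<phi> y"
proof (rule ccontr)
  assume "\<phi> x \<noteq> \<phi> y"
  obtain x' where x': "x' \<in> V - N" "{x, x'} \<in> E" using x unfolding isolated_def by auto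
  obtain y' where y': "y' \<in> V - N" "{y, y'} \<in> E" using y unfolding isolated_def by auto
  have "\<phi> x' \<noteq> \<phi> x" "\<phi> y' \<noteq> \<phi> y" using \<phi> x x' y y' unfolding proper_colouring_def by auto
  then have "{x', y} \<notin> E" "{x, y'} \<notin> E"
    using \<phi> x' y' x y \<open>\<phi> x \<noteq> \<phi> y\<close> unfolding proper_colouring_def by (metis DiffD1)+
  moreover have "{x, y} \<notin> E" "{n, x'} \<notin> E" "{n, y'} \<notin> E"
    using triangle_freeD[OF triangle_free, of x n y] triangle_freeD[OF triangle_free, of n x x']
      triangle_freeD[OF triangle_free, of n y y'] n x y x' y'
    by (auto simp: insert_commute)
  moreover have "{x', y'} \<notin> E"
  proof
    assume "{x', y'} \<in> E"
    then have "{n, x'} \<in> E"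
      using probe_adjacent_within_two_steps[OF n, of y y' x'] x' y' y by (simp add: insert_commute)
    with \<open>{n, x'} \<notin> E\<close> show False by blast
  qed
  moreover have "{x', x} \<in> E" "{x, n} \<in> E" "{x', n} \<notin> E"
    using x x' \<open>{n, x'} \<notin> E\<close> by (simp_all add: insert_commute)
  ultimately have "induced_P5 E x' x n y y'" using y y' unfolding induced_P5_def by blast
  moreover have "\<not> induced_P5 E x' x n y y'"
    using n x y x' y' by (intro no_induced_P5_single_probe) auto
  ultimately show False by blast
qed

definition probe_colouring :: "('a \<Rightarrow> bool) \<Rightarrow> 'a \<Rightarrow> nat" where
  "probe_colouring \<phi> v =
    (if v \<in> isolated then 0
     else if v \<notin> N then (if \<phi> v then 1 else 2)
     else if \<exists>t\<in>isolated. {v, t} \<in> E then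
       (if \<exists>x\<in>V - N - isolated. {v, x} \<in> E \<and> \<phi> x then 2 else 1)
     else 0)"

lemma probe_colouring_proper_at:
  assumes \<phi>: "proper_colouring (V - N) E \<phi>"
    and uv: "u \<in> V" "v \<in> V" "{u, v} \<in> E" "u \<notin> N"
  shows "probe_colouring \<phi> u \<noteq> probe_colouring \<phi> v"
proof (cases "u \<in> isolated")
  case True
  then have "v \<in> N" "v \<notin> isolated" "\<exists>t\<in>isolated. {v, t} \<in> E"
    using uv unfolding isolated_def by (auto simp: insert_commute)
  with True show ?thesis by (simp add: probe_colouring_def)
next
  case False
  then have u: "u \<in> V - N - isolated" using uv by blast
  then have colour_u: "probe_colouring \<phi> u = (if \<phi> u then 1 else 2)"
    by (simp add: probe_colouring_def)
  have vu: "{v, u} \<in> E" using uv(3) by (simp add: insert_commute)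
  show ?thesis
  proof (cases "v \<in> N")
    case False
    then have "v \<in> V - N" using uv(2) by blast
    then have "v \<notin> isolated" "\<phi> u \<noteq> \<phi> v"
      using u vu proper_colouringD[OF \<phi> _ _ uv(3)] unfolding isolated_def by blast+
    with False colour_u show ?thesis by (simp add: probe_colouring_def)
  next
    case True
    then have "v \<notin> isolated" unfolding isolated_def by blast
    show ?thesis
    proof (cases "\<exists>t\<in>isolated. {v, t} \<in> E")
      case False
      with True \<open>v \<notin> isolated\<close> colour_u show ?thesis by (simp add: probe_colouring_def)
    next
      case adjacent_isolated: True
      then obtain t where t: "t \<in> isolated" "{v, t} \<in> E" by blast
      have "\<phi> x = \<phi> u" if "x \<in> V - N - isolated" "{v, x} \<in> E" for x
        using probe_neighbours_same_side[OF \<phi> True uv(2) t that u vu] .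
      then have "(\<exists>x\<in>V - N - isolated. {v, x} \<in> E \<and> \<phi> x) \<longleftrightarrow> \<phi> u" using u vu by blast
      then have "probe_colouring \<phi> v = (if \<phi> u then 2 else 1)"
        using True \<open>v \<notin> isolated\<close> adjacent_isolated by (simp add: probe_colouring_def)
      with colour_u show ?thesis by simp
    qed
  qed
qed

lemma colourable_if_no_induced_C5_outside_probes:
  assumes "no_induced_C5 (V - N) E"
  shows "colourable 3 V E"
proof -
  have "finite (V - N)" "triangle_free (V - N) E"
    using finite_V triangle_free_subset[OF triangle_free Diff_subset] by simp_all
  then obtain \<phi> :: "'a \<Rightarrow> bool" where \<phi>: "proper_colouring (V - N) E \<phi>"
    using bipartite_if_triangle_P5_C5_free no_induced_P5_outside_probes assms by blast
  have "proper_colouring V E (probe_colouring \<phi>)"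
    unfolding proper_colouring_def
  proof (intro ballI impI)
    fix u v assume uv: "u \<in> V" "v \<in> V" "{u, v} \<in> E"
    show "probe_colouring \<phi> u \<noteq> probe_colouring \<phi> v"
    proof (cases "u \<in> N")
      case True
      then have "v \<notin> N" using independent uv(3) by blast
      moreover have "{v, u} \<in> E" using uv(3) by (simp add: insert_commute)
      ultimately show ?thesis using probe_colouring_proper_at[OF \<phi>, of v u] uv(1,2) by argo
    qed (use probe_colouring_proper_at[OF \<phi>] uv in blast)
  qed
  moreover have "probe_colouring \<phi> v < 3" for v unfolding probe_colouring_def by simp
  ultimately show ?thesis unfolding colourable_iff_proper_colouring by blast
qed

context
  fixes z :: "nat \<Rightarrow> 'a"
  assumes C5_outside_probes: "range z \<subseteq> V - N" and C5: "induced_C5 E z"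
begin

lemma C5_vertex: "z i \<in> V" "z i \<notin> N"
  using C5_outside_probes by auto

lemma C5_attachment:
  assumes "w \<in> V" "{w, z i} \<in> E"
  shows "{w, z (i + 2)} \<in> E \<or> {w, z (i + 3)} \<in> E"
proof (rule ccontr)
  assume "\<not> ?thesis"
  moreover have "{w, z (i + 1)} \<notin> E"
    using triangle_freeD[OF triangle_free assms(1) C5_vertex(1)[of i] C5_vertex(1)[of "i + 1"] assms(2)
        induced_C5_window(1)[OF C5, of i]] .
  ultimately have "induced_P5 E w (z i) (z (i + 1)) (z (i + 2)) (z (i + 3))"
    using assms(2) induced_C5_window[OF C5, of i] unfolding induced_P5_def by blast
  moreover have "\<not> induced_P5 E w (z i) (z (i + 1)) (z (i + 2)) (z (i + 3))"
    using assms(1) C5_vertex by (intro no_induced_P5_single_probe) auto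
  ultimately show False by blast
qed

lemma C5_neighbourhood_closed:
  "\<forall>w\<in>neighbourhood V E (range z). \<forall>x\<in>V - neighbourhood V E (range z). {w, x} \<notin> E"
proof (intro ballI notI)
  fix w x
  assume w: "w \<in> neighbourhood V E (range z)" and x: "x \<in> V - neighbourhood V E (range z)"
    and wx: "{w, x} \<in> E"
  obtain i where "w \<in> V" "{w, z i} \<in> E" using w unfolding neighbourhood_def by blast
  then obtain j where j: "{w, z j} \<in> E" "{w, z (j + 2)} \<in> E"
  proof (cases "{w, z (i + 2)} \<in> E")
    case False
    then have "{w, z (i + 3)} \<in> E" using C5_attachment[OF \<open>w \<in> V\<close> \<open>{w, z i} \<in> E\<close>] by blast
    moreover have "z (i + 3 + 2) = z i"
      using induced_C5_mod[OF C5, of "i + 3 + 2"] induced_C5_mod[OF C5, of i] by simp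
    ultimately show ?thesis using that[of "i + 3"] \<open>{w, z i} \<in> E\<close> by simp
  qed
  have "{z j, z (j + 4)} \<in> E" using induced_C5_window(5)[OF C5, of j] by (simp add: insert_commute)
  then have "{w, z (j + 4)} \<notin> E"
    using triangle_freeD[OF triangle_free \<open>w \<in> V\<close> C5_vertex(1)[of j] C5_vertex(1)[of "j + 4"] j(1)]
    by blast
  moreover have "{w, z (j + 3)} \<notin> E"
    using triangle_freeD[OF triangle_free \<open>w \<in> V\<close> C5_vertex(1)[of "j + 2"] C5_vertex(1)[of "j + 3"] j(2)
        induced_C5_window(3)[OF C5, of j]] .
  moreover have "{x, z k} \<notin> E" for k using x unfolding neighbourhood_def by (auto simp: insert_commute)
  moreover have "{x, w} \<in> E" using wx by (simp add: insert_commute)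
  ultimately have "induced_P5 E x w (z (j + 2)) (z (j + 3)) (z (j + 4))"
    using j induced_C5_window[OF C5, of j] unfolding induced_P5_def by blast
  moreover have "\<not> (x \<in> N \<and> w \<in> N)" using independent wx by blast
  then have "\<not> induced_P5 E x w (z (j + 2)) (z (j + 3)) (z (j + 4))"
    using x \<open>w \<in> V\<close> C5_vertex by (intro no_induced_P5_single_probe) auto
  ultimately show False by blast
qed

lemma C5_neighbourhood_meets_middle:
  assumes "w \<in> neighbourhood V E (range z)"
  shows "{w, z 1} \<in> E \<or> {w, z 2} \<in> E \<or> {w, z 3} \<in> E"
proof -
  obtain i where "w \<in> V" "{w, z (i mod 5)} \<in> E"
    using assms induced_C5_mod[OF C5] unfolding neighbourhood_def by auto
  moreover have "i mod 5 = 0 \<or> i mod 5 = 1 \<or> i mod 5 = 2 \<or> i mod 5 = 3 \<or> i mod 5 = 4" by auto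
  moreover have "{w, z 2} \<in> E \<or> {w, z 3} \<in> E" if "{w, z 0} \<in> E"
    using C5_attachment[of w 0, unfolded add_0] \<open>w \<in> V\<close> that by blast
  moreover have "{w, z 1} \<in> E \<or> {w, z 2} \<in> E" if "{w, z 4} \<in> E"
  proof -
    have "(4::nat) + 2 = 6" "(4::nat) + 3 = 7" "z 6 = z 1" "z 7 = z 2"
      using induced_C5_mod[OF C5, of 6] induced_C5_mod[OF C5, of 7] by simp_all
    then show ?thesis using C5_attachment[OF \<open>w \<in> V\<close> that] by metis
  qed
  ultimately show ?thesis by metis
qed

lemma C5_neighbourhood_colourable: "colourable 3 (neighbourhood V E (range z)) E"
proof -
  define hub where "hub w = (if {w, z 1} \<in> E then 1 else if {w, z 2} \<in> E then 2 else 3 :: nat)"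
    for w
  have adjacent_hub: "{w, z (hub w)} \<in> E" if "w \<in> neighbourhood V E (range z)" for w
    using C5_neighbourhood_meets_middle[OF that] unfolding hub_def by auto
  have "proper_colouring (neighbourhood V E (range z)) E (\<lambda>w. hub w - 1)"
    unfolding proper_colouring_def
  proof (intro ballI impI notI)
    fix u v assume u: "u \<in> neighbourhood V E (range z)" and v: "v \<in> neighbourhood V E (range z)"
      and uv: "{u, v} \<in> E" and "hub u - 1 = hub v - 1"
    then have "hub u = hub v" unfolding hub_def by (simp split: if_splits)
    then have "{u, z (hub u)} \<in> E" "{z (hub u), v} \<in> E"
      using adjacent_hub[OF u] adjacent_hub[OF v] by (simp_all add: insert_commute)
    moreover have "u \<in> V" "v \<in> V" using u v unfolding neighbourhood_def by blast+
    ultimately show False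
      using triangle_freeD[OF triangle_free _ C5_vertex(1)[of "hub u"]] uv by blast
  qed
  moreover have "hub w - 1 < 3" for w unfolding hub_def by simp
  ultimately show ?thesis
    unfolding colourable_iff_proper_colouring by (intro exI[of _ "\<lambda>w. hub w - 1"]) simp
qed

end

end

theorem colourable_if_triangle_free_probe_P5:
  assumes "triangle_free_probe_P5_graph V E N F"
  shows "colourable 3 V E"
  using assms
proof (induction "card V" arbitrary: V rule: less_induct)
  case less
  then interpret triangle_free_probe_P5_graph V E N F by blast
  show ?case
  proof (cases "no_induced_C5 (V - N) E")
    case True
    then show ?thesis by (rule colourable_if_no_induced_C5_outside_probes)
  next
    case False
    then obtain z where z: "range z \<subseteq> V - N" "induced_C5 E z" unfolding no_induced_C5_def by blast
    let ?R = "neighbourhood V E (range z)"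
    have "z 0 \<in> ?R"
      using z induced_C5_window(1)[OF z(2), of 0] unfolding neighbourhood_def by auto
    then have "card (V - ?R) < card V"
      using finite_V by (intro psubset_card_mono) (auto simp: neighbourhood_def)
    then have "colourable 3 (V - ?R) E" using less subgraph by blast
    then show ?thesis
      using colourable_combine[OF C5_neighbourhood_closed[OF z] C5_neighbourhood_colourable[OF z]]
      by blast
  qed
qed

theorem mainTheorem4:
  fixes V :: "'a set" and E :: "'a set set"
  assumes "simple_graph V E"
  shows "(C3_free V E \<and> probe_P5_free V E \<longrightarrow> colourable 3 V E)
       \<and> (probe_C3_P5_free V E \<longrightarrow> colourable 3 V E)"
proof -
  have edges: "\<forall>e\<in>E. card e = 2" and "finite V" using assms unfolding simple_graph_def by auto
  have probe_edges: "\<forall>e\<in>E \<union> F. card e = 2" if "F \<subseteq> pairs N" for N F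
    using edges that unfolding pairs_def by auto
  have colourable: "colourable 3 V E"
    if "triangle_free V E" "independent_set V E N" "F \<subseteq> pairs N" "P5_free V (E \<union> F)" for N F
    using that \<open>finite V\<close> P5_free_imp_no_induced_P5[OF that(4) probe_edges[OF that(3)]]
    by (intro colourable_if_triangle_free_probe_P5, unfold_locales) (auto simp: independent_set_def)
  show ?thesis
  proof (intro conjI impI)
    assume "C3_free V E \<and> probe_P5_free V E"
    then show "colourable 3 V E"
      using colourable C3_free_imp_triangle_free[OF _ edges] unfolding probe_P5_free_def by blast
  next
    assume "probe_C3_P5_free V E"
    then obtain N F where "independent_set V E N" "F \<subseteq> pairs N" "C3_free V (E \<union> F)" "P5_free V (E \<union> F)"
      unfolding probe_C3_P5_free_def by blast
    moreover from this have "triangle_free V E"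
      using C3_free_imp_triangle_free probe_edges triangle_free_edge_subset by blast
    ultimately show "colourable 3 V E" using colourable by blast
  qed
qed

end
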